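(* For every $z\in Z$ and all $v,w\in W$, \[ \pi\bullet\big(\zeta(v)_{I_w}\cdot z\big)=\pi\bullet\big([v]\cdot(Y_{I_w}\bullet z)\big)=(Y_{I_w}\bullet z)_v\,\mathbf{1}, \] where $(y)_v$ denotes the $v$-coordinate of $y\in Z$.
   Context: Let $\Phi$ be a finite real root system with simple roots $\Pi$, positive roots $\Phi_+$, negative roots $\Phi_-=-\Phi_+$, and finite Coxeter group $W$ generated by the reflections $s_\alpha$, $s_\alpha(\lambda)=\lambda-\alpha^\vee(\lambda)\alpha$. Let $\mathcal O\subset\mathbb R$ be its coefficient ring, $\Lambda_r$ the $\mathcal O$-span of $\Pi$, $\Lambda_w=\{\lambda\in\Lambda_r\otimes K:\alpha^\vee(\lambda)\in\mathcal O\ \forall\alpha\in\Phi_+\}$ ($K$ the fraction field of $\mathcal O$), and $\Lambda$ a free $\mathcal O$-module with $\Lambda_r\subset\Lambda\subset\Lambda_w$. Let $F$ be a one-dimensional commutative formal group law over a commutative ring $R$, and $S$ the formal group ring: $S=R[[x_\lambda]]_{\lambda\in\Lambda}/\overline{J}$ where $\overline J$ is the closure of the ideal generated by $x_0$ and $x_{\lambda+\mu}-F(x_\lambda,x_\mu)$ (no completion if $F$ is a polynomial); in the non-crystallographic case $F$ is additive, $R=\mathcal O$ and $S=\mathrm{Sym}_{\mathcal O}(\Lambda)$ with $x_\lambda=\lambda$. $W$ acts on $S$ by $w(x_\lambda)=x_{w(\lambda)}$. Assume each $x_\alpha$ is regular in $S$ and that for distinct $\alpha,\alpha'\in\Phi_+$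 and $f\in S$, $x_\alpha\mid x_{\alpha'}f$ implies $x_\alpha\mid f$. Let $Q=S[1/x_\alpha:\alpha\in\Phi_+]$ and $Q_W$ the twisted group algebra: the free left $Q$-module on $\{\delta_w\}_{w\in W}$ with $\delta_w q=w(q)\delta_w$. Put $Y_\alpha=\frac1{x_{-\alpha}}+\frac1{x_\alpha}\delta_{s_\alpha}$, $Y_i=Y_{\alpha_i}$ for simple roots $\alpha_i$. For each $w\in W$ fix a reduced expression $w=s_{i_1}\cdots s_{i_l}$, write $I_w=(i_1,\dots,i_l)$, $Y_{I_w}=Y_{i_1}\cdots Y_{i_l}$, and $I_w^{-1}=(i_l,\dots,i_1)$, $Y_{I_w^{-1}}=Y_{i_l}\cdots Y_{i_1}$. The structure algebra is $Z=\{(z_v)_{v\in W}\in\bigoplus_{v\in W}S: z_{s_\alpha w}-z_w\in x_\alpha S\ \forall w\in W,\alpha\in\Phi_+\}$ with coordinatewise product. The Hecke action of $Q_W$ is $q\delta_w\bullet(z_v)_v=(v(q)z_{vw})_v$ and the Weyl action is $q\delta_w\odot(z_v)_v=(q\,w(z_{w^{-1}v}))_v$. Let $\mathbf 1=(1)_v$, $x_\Pi=\prod_{\alpha\in\Phi_-}x_\alpha$, $[e]\in Z$ the element with $e$-coordinate $x_\Pi$ and all other coordinates $0$, $[v]=\delta_v\odot[e]$, and twisted Schubert classes $\zeta(v)_{I_w}=Y_{I_w^{-1}}\bullet[v]$. The push-forward element is $\pi=\sum_{w\in W}\frac{1}{w(x_\Pi)}\delta_w\in Q_W$, acting on $Z$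 by the Hecke action. *)

theory Defs
  imports "HOL-Analysis.Analysis"
begin

type_synonym 'n vec = "real ^ 'n"

definition coroot :: "'n::finite vec \<Rightarrow> 'n vec \<Rightarrow> real" where
  "coroot \<alpha> l = 2 * (\<alpha> \<bullet> l) / (\<alpha> \<bullet> \<alpha>)"

definition refl :: "'n::finite vec \<Rightarrow> 'n vec \<Rightarrow> 'n vec" where
  "refl \<alpha> l = l - coroot \<alpha> l *\<^sub>R \<alpha>"

definition root_system :: "'n::finite vec set \<Rightarrow> bool" where
  "root_system \<Phi> \<longleftrightarrow> finite \<Phi> \<and> 0 \<notin> \<Phi> \<and>
     (\<forall>\<alpha>\<in>\<Phi>. \<forall>\<beta>\<in>\<Phi>. refl \<alpha> \<beta> \<in> \<Phi>) \<and>
     (\<forall>\<alpha>\<in>\<Phi>. \<forall>c. c *\<^sub>R \<alpha> \<in> \<Phi> \<longrightarrow> c = 1 \<or> c = -1)"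

definition nonneg_comb :: "'n::finite vec set \<Rightarrow> 'n vec \<Rightarrow> bool" where
  "nonneg_comb Sim \<beta> \<longleftrightarrow> (\<exists>c. (\<forall>\<alpha>\<in>Sim. c \<alpha> \<ge> 0) \<and> \<beta> = (\<Sum>\<alpha>\<in>Sim. c \<alpha> *\<^sub>R \<alpha>))"

definition simple_system :: "'n::finite vec set \<Rightarrow> 'n vec set \<Rightarrow> bool" where
  "simple_system \<Phi> Sim \<longleftrightarrow> Sim \<subseteq> \<Phi> \<and> independent Sim \<and>
     (\<forall>\<beta>\<in>\<Phi>. nonneg_comb Sim \<beta> \<or> nonneg_comb Sim (- \<beta>))"

definition pos_roots :: "'n::finite vec set \<Rightarrow> 'n vec set \<Rightarrow> 'n vec set" where
  "pos_roots \<Phi> Sim = {\<beta>\<in>\<Phi>. nonneg_comb Sim \<beta>}"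

definition neg_roots :: "'n::finite vec set \<Rightarrow> 'n vec set \<Rightarrow> 'n vec set" where
  "neg_roots \<Phi> Sim = uminus ` pos_roots \<Phi> Sim"

inductive_set weyl :: "'n::finite vec set \<Rightarrow> ('n vec \<Rightarrow> 'n vec) set" for \<Phi> where
  weyl_id: "id \<in> weyl \<Phi>"
| weyl_step: "\<alpha> \<in> \<Phi> \<Longrightarrow> w \<in> weyl \<Phi> \<Longrightarrow> refl \<alpha> \<circ> w \<in> weyl \<Phi>"

inductive_set coeff_ring :: "'n::finite vec set \<Rightarrow> real set" for \<Phi> where
  cr_one: "1 \<in> coeff_ring \<Phi>"
| cr_gen: "\<alpha> \<in> \<Phi> \<Longrightarrow> \<beta> \<in> \<Phi> \<Longrightarrow> coroot \<alpha> \<beta> \<in> coeff_ring \<Phi>"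
| cr_add: "a \<in> coeff_ring \<Phi> \<Longrightarrow> b \<in> coeff_ring \<Phi> \<Longrightarrow> a + b \<in> coeff_ring \<Phi>"
| cr_neg: "a \<in> coeff_ring \<Phi> \<Longrightarrow> - a \<in> coeff_ring \<Phi>"
| cr_mult: "a \<in> coeff_ring \<Phi> \<Longrightarrow> b \<in> coeff_ring \<Phi> \<Longrightarrow> a * b \<in> coeff_ring \<Phi>"

definition coeff_field :: "'n::finite vec set \<Rightarrow> real set" where
  "coeff_field \<Phi> = {a / b | a b. a \<in> coeff_ring \<Phi> \<and> b \<in> coeff_ring \<Phi> \<and> b \<noteq> 0}"

definition span_over :: "real set \<Rightarrow> 'n::finite vec set \<Rightarrow> 'n vec set" where
  "span_over A B = {\<Sum>b\<in>B. c b *\<^sub>R b | c. \<forall>b\<in>B. c b \<in> A}"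

definition root_lattice :: "'n::finite vec set \<Rightarrow> 'n vec set \<Rightarrow> 'n vec set" where
  "root_lattice \<Phi> Sim = span_over (coeff_ring \<Phi>) Sim"

definition weight_lattice :: "'n::finite vec set \<Rightarrow> 'n vec set \<Rightarrow> 'n vec set" where
  "weight_lattice \<Phi> Sim = {l \<in> span_over (coeff_field \<Phi>) Sim.
       \<forall>\<alpha>\<in>pos_roots \<Phi> Sim. coroot \<alpha> l \<in> coeff_ring \<Phi>}"

definition admissible_lattice :: "'n::finite vec set \<Rightarrow> 'n vec set \<Rightarrow> 'n vec set \<Rightarrow> bool" where
  "admissible_lattice \<Phi> Sim \<Lambda> \<longleftrightarrow>
     root_lattice \<Phi> Sim \<subseteq> \<Lambda> \<and> \<Lambda> \<subseteq> weight_lattice \<Phi> Sim \<and>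
     (\<exists>B. finite B \<and> B \<subseteq> \<Lambda> \<and> \<Lambda> = span_over (coeff_ring \<Phi>) B \<and>
        (\<forall>c. (\<forall>b\<in>B. c b \<in> coeff_ring \<Phi>) \<longrightarrow> (\<Sum>b\<in>B. c b *\<^sub>R b) = 0 \<longrightarrow> (\<forall>b\<in>B. c b = 0)))"

section \<open>Ring data: S inside the ring Q where the x_alpha are inverted\<close>

definition qinv :: "'q::comm_ring_1 \<Rightarrow> 'q" where
  "qinv a = (THE b. a * b = 1)"

definition subring_of :: "'q::comm_ring_1 set \<Rightarrow> bool" where
  "subring_of S \<longleftrightarrow> 0 \<in> S \<and> 1 \<in> S \<and> (\<forall>a\<in>S. \<forall>b\<in>S. a + b \<in> S \<and> a - b \<in> S \<and> a * b \<in> S)"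

definition weyl_ring_action ::
  "('n::finite vec \<Rightarrow> 'n vec) set \<Rightarrow> 'n vec set \<Rightarrow> 'q::comm_ring_1 set \<Rightarrow> ('n vec \<Rightarrow> 'q)
     \<Rightarrow> (('n vec \<Rightarrow> 'n vec) \<Rightarrow> 'q \<Rightarrow> 'q) \<Rightarrow> bool" where
  "weyl_ring_action W \<Lambda> S x act \<longleftrightarrow>
     (\<forall>a. act id a = a) \<and>
     (\<forall>v\<in>W. \<forall>w\<in>W. \<forall>a. act (v \<circ> w) a = act v (act w a)) \<and>
     (\<forall>w\<in>W. act w 1 = 1 \<and> (\<forall>a b. act w (a + b) = act w a + act w b \<and> act w (a * b) = act w a * act w b)) \<and>
     (\<forall>w\<in>W. \<forall>a\<in>S. act w a \<in> S) \<and>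
     (\<forall>w\<in>W. \<forall>l\<in>\<Lambda>. act w (x l) = x (w l))"

section \<open>Twisted group algebra Q_W: elements are coefficient functions w \<mapsto> q_w (sum q_w delta_w)\<close>

definition qw_delta :: "('n::finite vec \<Rightarrow> 'n vec) \<Rightarrow> ('n vec \<Rightarrow> 'n vec) \<Rightarrow> 'q::comm_ring_1" where
  "qw_delta v = (\<lambda>u. if u = v then 1 else 0)"

text \<open>(a delta_u)(b delta_w) = a u(b) delta_(uw)\<close>
definition qw_mult ::
  "('n::finite vec \<Rightarrow> 'n vec) set \<Rightarrow> (('n vec \<Rightarrow> 'n vec) \<Rightarrow> 'q \<Rightarrow> 'q)
    \<Rightarrow> (('n vec \<Rightarrow> 'n vec) \<Rightarrow> 'q::comm_ring_1) \<Rightarrow> (('n vec \<Rightarrow> 'n vec) \<Rightarrow> 'q) \<Rightarrow> ('n vec \<Rightarrow> 'n vec) \<Rightarrow> 'q" where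
  "qw_mult W act a b = (\<lambda>t. \<Sum>u\<in>W. \<Sum>w\<in>{w\<in>W. u \<circ> w = t}. a u * act u (b w))"

text \<open>Y_alpha = 1/x_(-alpha) + 1/x_alpha delta_(s_alpha)\<close>
definition Yop :: "('n::finite vec \<Rightarrow> 'q::comm_ring_1) \<Rightarrow> 'n vec \<Rightarrow> ('n vec \<Rightarrow> 'n vec) \<Rightarrow> 'q" where
  "Yop x \<alpha> = (\<lambda>u. (if u = id then qinv (x (- \<alpha>)) else 0) + (if u = refl \<alpha> then qinv (x \<alpha>) else 0))"

definition Yword ::
  "('n::finite vec \<Rightarrow> 'n vec) set \<Rightarrow> (('n vec \<Rightarrow> 'n vec) \<Rightarrow> 'q \<Rightarrow> 'q) \<Rightarrow> ('n vec \<Rightarrow> 'q::comm_ring_1)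
     \<Rightarrow> 'n vec list \<Rightarrow> ('n vec \<Rightarrow> 'n vec) \<Rightarrow> 'q" where
  "Yword W act x I = foldr (\<lambda>\<alpha> acc. qw_mult W act (Yop x \<alpha>) acc) I (qw_delta id)"

definition word_elt :: "'n::finite vec list \<Rightarrow> 'n vec \<Rightarrow> 'n vec" where
  "word_elt I = foldr (\<lambda>\<alpha> f. refl \<alpha> \<circ> f) I id"

definition reduced_word :: "'n::finite vec set \<Rightarrow> 'n vec list \<Rightarrow> ('n vec \<Rightarrow> 'n vec) \<Rightarrow> bool" where
  "reduced_word Sim I w \<longleftrightarrow> set I \<subseteq> Sim \<and> word_elt I = w \<and>
     (\<forall>J. set J \<subseteq> Sim \<longrightarrow> word_elt J = w \<longrightarrow> length I \<le> length J)"

section \<open>Structure algebra and the two actions (elements of the direct sum are functions W -> Q, zero off W)\<close>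

definition struct_alg ::
  "('n::finite vec \<Rightarrow> 'n vec) set \<Rightarrow> 'n vec set \<Rightarrow> 'q::comm_ring_1 set \<Rightarrow> ('n vec \<Rightarrow> 'q)
     \<Rightarrow> (('n vec \<Rightarrow> 'n vec) \<Rightarrow> 'q) set" where
  "struct_alg W Pos S x = {z. (\<forall>v\<in>W. z v \<in> S) \<and> (\<forall>v. v \<notin> W \<longrightarrow> z v = 0) \<and>
      (\<forall>w\<in>W. \<forall>\<alpha>\<in>Pos. \<exists>f\<in>S. z (refl \<alpha> \<circ> w) - z w = x \<alpha> * f)}"

text \<open>Hecke action: q delta_w \<bullet> (z_v) = (v(q) z_(vw))_v\<close>
definition hecke ::
  "('n::finite vec \<Rightarrow> 'n vec) set \<Rightarrow> (('n vec \<Rightarrow> 'n vec) \<Rightarrow> 'q \<Rightarrow> 'q)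
     \<Rightarrow> (('n vec \<Rightarrow> 'n vec) \<Rightarrow> 'q::comm_ring_1) \<Rightarrow> (('n vec \<Rightarrow> 'n vec) \<Rightarrow> 'q) \<Rightarrow> ('n vec \<Rightarrow> 'n vec) \<Rightarrow> 'q" where
  "hecke W act c z = (\<lambda>v. \<Sum>w\<in>W. act v (c w) * z (v \<circ> w))"

text \<open>Weyl action: q delta_w \<odot> (z_v) = (q w(z_(w^-1 v)))_v\<close>
definition weyl_act ::
  "('n::finite vec \<Rightarrow> 'n vec) set \<Rightarrow> (('n vec \<Rightarrow> 'n vec) \<Rightarrow> 'q \<Rightarrow> 'q)
     \<Rightarrow> (('n vec \<Rightarrow> 'n vec) \<Rightarrow> 'q::comm_ring_1) \<Rightarrow> (('n vec \<Rightarrow> 'n vec) \<Rightarrow> 'q) \<Rightarrow> ('n vec \<Rightarrow> 'n vec) \<Rightarrow> 'q" where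
  "weyl_act W act c z = (\<lambda>v. \<Sum>w\<in>W. c w * act w (z (inv w \<circ> v)))"

definition zprod :: "(('n::finite vec \<Rightarrow> 'n vec) \<Rightarrow> 'q::comm_ring_1) \<Rightarrow> (('n vec \<Rightarrow> 'n vec) \<Rightarrow> 'q) \<Rightarrow> ('n vec \<Rightarrow> 'n vec) \<Rightarrow> 'q" where
  "zprod y z = (\<lambda>v. y v * z v)"

definition zone :: "('n::finite vec \<Rightarrow> 'n vec) set \<Rightarrow> ('n vec \<Rightarrow> 'n vec) \<Rightarrow> 'q::comm_ring_1" where
  "zone W = (\<lambda>v. if v \<in> W then 1 else 0)"

definition xPi :: "'n::finite vec set \<Rightarrow> 'n vec set \<Rightarrow> ('n vec \<Rightarrow> 'q::comm_ring_1) \<Rightarrow> 'q" where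
  "xPi \<Phi> Sim x = (\<Prod>\<alpha>\<in>neg_roots \<Phi> Sim. x \<alpha>)"

definition class_e :: "'q::comm_ring_1 \<Rightarrow> ('n::finite vec \<Rightarrow> 'n vec) \<Rightarrow> 'q" where
  "class_e p = (\<lambda>u. if u = id then p else 0)"

definition class_v ::
  "('n::finite vec \<Rightarrow> 'n vec) set \<Rightarrow> (('n vec \<Rightarrow> 'n vec) \<Rightarrow> 'q \<Rightarrow> 'q) \<Rightarrow> 'q::comm_ring_1
     \<Rightarrow> ('n vec \<Rightarrow> 'n vec) \<Rightarrow> ('n vec \<Rightarrow> 'n vec) \<Rightarrow> 'q" where
  "class_v W act p v = weyl_act W act (qw_delta v) (class_e p)"

text \<open>push-forward element pi = sum_w 1/w(x_Pi) delta_w\<close>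
definition pi_elt :: "(('n::finite vec \<Rightarrow> 'n vec) \<Rightarrow> 'q \<Rightarrow> 'q) \<Rightarrow> 'q::comm_ring_1 \<Rightarrow> ('n vec \<Rightarrow> 'n vec) \<Rightarrow> 'q" where
  "pi_elt act p = (\<lambda>w. qinv (act w p))"

end

theory Submission
  imports Defs
begin

text \<open>The push-forward computes a pairing: \<open>\<pi> \<bullet> (f g) = \<langle>f, g\<rangle> \<one>\<close>, where \<open>\<langle>f, g\<rangle>\<close> is the
  sum of \<open>f\<^sub>t g\<^sub>t / t(x\<^sub>\<Pi>)\<close> over \<open>t \<in> W\<close>. For a simple root \<open>\<alpha>\<close> the operator \<open>Y\<^sub>\<alpha>\<close> is
  self-adjoint for this pairing: \<open>s\<^sub>\<alpha>\<close> maps \<open>x\<^sub>\<Pi>\<close> to \<open>x\<^sub>\<Pi> x\<^sub>\<alpha> / x\<^sub>-\<^sub>\<alpha>\<close>, which makes the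
  weight \<open>1 / t(x\<^sub>\<Pi> x\<^sub>\<alpha>)\<close> of the twisted part of \<open>Y\<^sub>\<alpha>\<close> invariant under \<open>t \<mapsto> t s\<^sub>\<alpha>\<close>.
  Hence \<open>\<langle>Y\<^bsub>I\<^sup>-\<^sup>1\<^esub> [v], z\<rangle> = \<langle>[v], Y\<^sub>I z\<rangle>\<close>, and since \<open>[v]\<close> is supported at \<open>v\<close> with value
  \<open>v(x\<^sub>\<Pi>)\<close>, this equals \<open>(Y\<^sub>I z)\<^sub>v\<close>. Along the way one needs that \<open>W\<close> is finite and that
  every root lies in the root lattice (by induction on the height), so that \<open>W\<close> permutes the
  \<open>x\<^sub>\<beta>\<close>.\<close>

section \<open>Reflections and the Weyl group\<close>

lemma refl_refl: "\<alpha> \<noteq> 0 \<Longrightarrow> refl \<alpha> (refl \<alpha> l) = l"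
  unfolding refl_def coroot_def by (simp add: inner_diff_right field_simps)

lemma refl_comp_refl: "\<alpha> \<noteq> 0 \<Longrightarrow> refl \<alpha> \<circ> refl \<alpha> = id"
  by (rule ext) (simp add: refl_refl)

lemma bij_refl: "\<alpha> \<noteq> 0 \<Longrightarrow> bij (refl \<alpha>)"
  using o_bij[OF refl_comp_refl refl_comp_refl] .

lemma inv_refl: "\<alpha> \<noteq> 0 \<Longrightarrow> inv (refl \<alpha>) = refl \<alpha>"
  by (metis inv_unique_comp refl_comp_refl)

lemma refl_self: "\<alpha> \<noteq> 0 \<Longrightarrow> refl \<alpha> \<alpha> = - \<alpha>"
  unfolding refl_def coroot_def by (simp add: scaleR_2)

lemma refl_uminus: "refl \<alpha> (- l) = - refl \<alpha> l"
  unfolding refl_def coroot_def by (simp add: algebra_simps)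

lemma inner_refl_refl: "\<alpha> \<noteq> 0 \<Longrightarrow> refl \<alpha> a \<bullet> refl \<alpha> b = a \<bullet> b"
  unfolding refl_def coroot_def
  by (simp add: inner_diff_left inner_diff_right inner_commute field_simps)

lemma refl_in_weyl: "\<alpha> \<in> \<Phi> \<Longrightarrow> refl \<alpha> \<in> weyl \<Phi>"
  using weyl_step[OF _ weyl_id] by fastforce

lemma weyl_comp_closed: "u \<in> weyl \<Phi> \<Longrightarrow> w \<in> weyl \<Phi> \<Longrightarrow> u \<circ> w \<in> weyl \<Phi>"
  by (induction u rule: weyl.induct) (auto simp: comp_assoc intro: weyl.intros)

lemma bij_weyl:
  assumes "0 \<notin> \<Phi>" and "w \<in> weyl \<Phi>"
  shows "bij w"
  using assms(2)
proof induction
  case (weyl_step \<alpha> w)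
  then have "\<alpha> \<noteq> 0" using assms(1) by auto
  then show ?case by (rule bij_comp[OF weyl_step.IH bij_refl])
qed (rule bij_id)

lemma inv_in_weyl:
  assumes "0 \<notin> \<Phi>" and "w \<in> weyl \<Phi>"
  shows "inv w \<in> weyl \<Phi>"
  using assms(2)
proof (induction w rule: weyl.induct)
  case weyl_id
  then show ?case by (metis inv_id weyl.weyl_id)
next
  case (weyl_step \<alpha> w)
  have \<alpha>: "\<alpha> \<noteq> 0" using weyl_step.hyps(1) assms(1) by auto
  have "inv (refl \<alpha> \<circ> w) = inv w \<circ> inv (refl \<alpha>)"
    by (rule o_inv_distrib[OF bij_refl[OF \<alpha>] bij_weyl[OF assms(1) weyl_step.hyps(2)]])
  then show ?case
    using weyl_comp_closed[OF weyl_step.IH refl_in_weyl[OF weyl_step.hyps(1)]] inv_refl[OF \<alpha>]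
    by (simp only:)
qed

lemma inner_weyl_weyl:
  assumes "0 \<notin> \<Phi>" and "w \<in> weyl \<Phi>"
  shows "w a \<bullet> w b = a \<bullet> b"
  using assms(2)
proof induction
  case (weyl_step \<alpha> w)
  then have "\<alpha> \<noteq> 0" using assms(1) by auto
  with weyl_step.IH show ?case by (simp add: inner_refl_refl)
qed simp

lemma weyl_maps_roots:
  assumes "root_system \<Phi>" and "w \<in> weyl \<Phi>" and "\<beta> \<in> \<Phi>"
  shows "w \<beta> \<in> \<Phi>"
  using assms(2) by induction (use assms in \<open>auto simp: root_system_def\<close>)

lemma weyl_diff_in_span: "w \<in> weyl \<Phi> \<Longrightarrow> w l - l \<in> span \<Phi>"
proof (induction w rule: weyl.induct)
  case weyl_id
  then show ?case by (simp add: span_zero)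
next
  case (weyl_step \<alpha> w)
  have "(refl \<alpha> \<circ> w) l - l = (w l - l) - coroot \<alpha> (w l) *\<^sub>R \<alpha>"
    by (simp add: refl_def)
  then show ?case using weyl_step by (metis span_base span_diff span_scale)
qed

text \<open>The difference of two elements of the Weyl group takes values in the span of the roots;
  if they agree on the roots, it is also orthogonal to every root.\<close>
lemma weyl_eqI:
  assumes R: "root_system \<Phi>" and w1: "w1 \<in> weyl \<Phi>" and w2: "w2 \<in> weyl \<Phi>"
    and eq: "\<And>\<beta>. \<beta> \<in> \<Phi> \<Longrightarrow> w1 \<beta> = w2 \<beta>"
  shows "w1 = w2"
proof
  fix l
  have z: "0 \<notin> \<Phi>" using R unfolding root_system_def by blast
  define d where "d = w1 l - w2 l"
  have "d = (w1 l - l) - (w2 l - l)" by (simp add: d_def)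
  then have d_span: "d \<in> span \<Phi>" using weyl_diff_in_span[OF w1] weyl_diff_in_span[OF w2] by (metis span_diff)
  have "orthogonal d \<gamma>" if \<gamma>: "\<gamma> \<in> \<Phi>" for \<gamma>
  proof -
    define \<beta> where "\<beta> = inv w1 \<gamma>"
    have \<beta>: "\<beta> \<in> \<Phi>" unfolding \<beta>_def using weyl_maps_roots[OF R inv_in_weyl[OF z w1] \<gamma>] .
    have "\<gamma> = w1 \<beta>" unfolding \<beta>_def using bij_weyl[OF z w1] by (simp add: bij_is_surj surj_f_inv_f)
    then have "d \<bullet> \<gamma> = w1 l \<bullet> w1 \<beta> - w2 l \<bullet> w2 \<beta>" using eq[OF \<beta>] by (simp add: d_def inner_diff_left)
    then show ?thesis using inner_weyl_weyl[OF z w1] inner_weyl_weyl[OF z w2] by (simp add: orthogonal_def)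
  qed
  then have "orthogonal d d" using orthogonal_to_span[OF d_span] by blast
  then show "w1 l = w2 l" unfolding d_def by (simp add: orthogonal_self)
qed

lemma finite_weyl:
  assumes R: "root_system \<Phi>"
  shows "finite (weyl \<Phi>)"
proof -
  have fin: "finite \<Phi>" using R unfolding root_system_def by blast
  have inj: "inj_on (\<lambda>w. restrict w \<Phi>) (weyl \<Phi>)"
  proof (rule inj_onI)
    fix a b assume a: "a \<in> weyl \<Phi>" and b: "b \<in> weyl \<Phi>" and eq: "restrict a \<Phi> = restrict b \<Phi>"
    show "a = b" by (rule weyl_eqI[OF R a b]) (metis eq restrict_apply')
  qed
  have "(\<lambda>w. restrict w \<Phi>) ` weyl \<Phi> \<subseteq> (\<Pi>\<^sub>E \<beta>\<in>\<Phi>. \<Phi>)"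
    using weyl_maps_roots[OF R] by auto
  then have "finite ((\<lambda>w. restrict w \<Phi>) ` weyl \<Phi>)"
    using finite_PiE[OF fin, of "\<lambda>_. \<Phi>"] fin finite_subset by blast
  then show ?thesis using finite_imageD[OF _ inj] by blast
qed

lemma bij_betw_weyl_comp_left:
  assumes "0 \<notin> \<Phi>" and "u \<in> weyl \<Phi>"
  shows "bij_betw ((\<circ>) u) (weyl \<Phi>) (weyl \<Phi>)"
proof (rule bij_betw_byWitness[where f'="(\<circ>) (inv u)"])
  have "bij u" using bij_weyl[OF assms] .
  then have "inv u \<circ> u = id" "u \<circ> inv u = id"
    by (simp_all add: bij_is_inj bij_is_surj inv_o_cancel surj_iff[symmetric])
  then show "\<forall>w\<in>weyl \<Phi>. inv u \<circ> (u \<circ> w) = w" "\<forall>w\<in>weyl \<Phi>. u \<circ> (inv u \<circ> w) = w"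
    by (simp_all add: o_assoc)
  show "(\<circ>) u ` weyl \<Phi> \<subseteq> weyl \<Phi>" "(\<circ>) (inv u) ` weyl \<Phi> \<subseteq> weyl \<Phi>"
    using weyl_comp_closed assms inv_in_weyl by blast+
qed

lemma bij_betw_weyl_comp_right:
  assumes "0 \<notin> \<Phi>" and "u \<in> weyl \<Phi>"
  shows "bij_betw (\<lambda>w. w \<circ> u) (weyl \<Phi>) (weyl \<Phi>)"
proof (rule bij_betw_byWitness[where f'="\<lambda>w. w \<circ> inv u"])
  have "bij u" using bij_weyl[OF assms] .
  then have "inv u \<circ> u = id" "u \<circ> inv u = id"
    by (simp_all add: bij_is_inj bij_is_surj inv_o_cancel surj_iff[symmetric])
  then show "\<forall>w\<in>weyl \<Phi>. w \<circ> u \<circ> inv u = w" "\<forall>w\<in>weyl \<Phi>. w \<circ> inv u \<circ> u = w"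
    by (simp_all add: comp_assoc)
  show "(\<lambda>w. w \<circ> u) ` weyl \<Phi> \<subseteq> weyl \<Phi>" "(\<lambda>w. w \<circ> inv u) ` weyl \<Phi> \<subseteq> weyl \<Phi>"
    using weyl_comp_closed assms inv_in_weyl by blast+
qed

section \<open>Positive roots and the root lattice\<close>

lemma span_over_add:
  assumes "\<And>a b. a \<in> A \<Longrightarrow> b \<in> A \<Longrightarrow> a + b \<in> A"
    and "u \<in> span_over A B" and "v \<in> span_over A B"
  shows "u + v \<in> span_over A B"
proof -
  obtain c d where "\<forall>b\<in>B. c b \<in> A" "u = (\<Sum>b\<in>B. c b *\<^sub>R b)" "\<forall>b\<in>B. d b \<in> A" "v = (\<Sum>b\<in>B. d b *\<^sub>R b)"
    using assms(2,3) unfolding span_over_def by blast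
  then have "u + v = (\<Sum>b\<in>B. (c b + d b) *\<^sub>R b) \<and> (\<forall>b\<in>B. c b + d b \<in> A)"
    using assms(1) by (simp add: scaleR_add_left sum.distrib)
  then show ?thesis unfolding span_over_def mem_Collect_eq by (rule exI[where x="\<lambda>b. c b + d b"])
qed

lemma span_over_uminus:
  assumes "\<And>a. a \<in> A \<Longrightarrow> - a \<in> A" and "u \<in> span_over A B"
  shows "- u \<in> span_over A B"
proof -
  obtain c where "\<forall>b\<in>B. c b \<in> A" "u = (\<Sum>b\<in>B. c b *\<^sub>R b)"
    using assms(2) unfolding span_over_def by blast
  then have "- u = (\<Sum>b\<in>B. (- c b) *\<^sub>R b) \<and> (\<forall>b\<in>B. - c b \<in> A)"
    using assms(1) by (simp add: sum_negf)
  then show ?thesis unfolding span_over_def mem_Collect_eq by (rule exI[where x="\<lambda>b. - c b"])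
qed

lemma scaleR_in_span_over:
  assumes "finite B" and "b \<in> B" and "0 \<in> A" and "k \<in> A"
  shows "k *\<^sub>R b \<in> span_over A B"
proof -
  have "(\<Sum>b'\<in>B. (if b' = b then k else 0) *\<^sub>R b') = (\<Sum>b'\<in>B. if b' = b then k *\<^sub>R b' else 0)"
    by (rule sum.cong) auto
  also have "\<dots> = k *\<^sub>R b"
    using assms(1,2) by simp
  finally have "k *\<^sub>R b = (\<Sum>b'\<in>B. (if b' = b then k else 0) *\<^sub>R b') \<and> (\<forall>b'\<in>B. (if b' = b then k else 0) \<in> A)"
    using assms(3,4) by simp
  then show ?thesis unfolding span_over_def mem_Collect_eq by (rule exI[where x="\<lambda>b'. if b' = b then k else 0"])
qed

lemma zero_in_coeff_ring: "0 \<in> coeff_ring \<Phi>"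
  using cr_add[OF cr_one cr_neg[OF cr_one]] by simp

lemma finite_measure_induct [consumes 2, case_names less]:
  fixes f :: "'a \<Rightarrow> 'b::linorder"
  assumes "finite A" and "a \<in> A"
    and less: "\<And>a. a \<in> A \<Longrightarrow> (\<And>b. b \<in> A \<Longrightarrow> f b < f a \<Longrightarrow> P b) \<Longrightarrow> P a"
  shows "P a"
  using assms(2)
proof (induction a rule: measure_induct_rule[where f="\<lambda>a. card {b \<in> A. f b < f a}"])
  case (less a)
  show ?case
  proof (rule assms(3)[OF less.prems])
    fix b assume "b \<in> A" and "f b < f a"
    then have "{c \<in> A. f c < f b} \<subset> {c \<in> A. f c < f a}" by auto
    then have "card {c \<in> A. f c < f b} < card {c \<in> A. f c < f a}"
      using assms(1) by (simp add: psubset_card_mono)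
    then show "P b" using less.IH \<open>b \<in> A\<close> by blast
  qed
qed

locale simple_root_system =
  fixes \<Phi> Sim :: "'n::finite vec set"
  assumes root_system: "root_system \<Phi>" and simple_system: "simple_system \<Phi> Sim"
begin

lemma finite_roots: "finite \<Phi>"
  using root_system unfolding root_system_def by blast

lemma zero_notin_roots: "0 \<notin> \<Phi>"
  using root_system unfolding root_system_def by blast

lemma refl_root: "\<alpha> \<in> \<Phi> \<Longrightarrow> \<beta> \<in> \<Phi> \<Longrightarrow> refl \<alpha> \<beta> \<in> \<Phi>"
  using root_system unfolding root_system_def by blast

lemma root_multiple: "\<alpha> \<in> \<Phi> \<Longrightarrow> c *\<^sub>R \<alpha> \<in> \<Phi> \<Longrightarrow> c = 1 \<or> c = -1"
  using root_system unfolding root_system_def by blast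

lemma simple_subset_roots: "Sim \<subseteq> \<Phi>"
  using simple_system unfolding simple_system_def by blast

lemma independent_simple: "independent Sim"
  using simple_system unfolding simple_system_def by blast

lemma finite_simple: "finite Sim"
  using simple_subset_roots finite_roots finite_subset by blast

lemma uminus_root: "\<beta> \<in> \<Phi> \<Longrightarrow> - \<beta> \<in> \<Phi>"
  using refl_root[of \<beta> \<beta>] refl_self[of \<beta>] zero_notin_roots by force

lemma roots_in_span: "\<beta> \<in> \<Phi> \<Longrightarrow> \<beta> \<in> span Sim"
proof -
  have "\<gamma> \<in> span Sim" if "nonneg_comb Sim \<gamma>" for \<gamma>
    using that unfolding nonneg_comb_def by (auto intro: span_sum span_scale span_base)
  then show "\<beta> \<in> \<Phi> \<Longrightarrow> \<beta> \<in> span Sim"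
    using simple_system unfolding simple_system_def by (metis span_neg minus_minus)
qed

lemma representation_sum_scaleR:
  assumes "\<gamma> \<in> Sim"
  shows "representation Sim (\<Sum>\<delta>\<in>Sim. c \<delta> *\<^sub>R \<delta>) \<gamma> = c \<gamma>"
proof -
  have "representation Sim (\<Sum>\<delta>\<in>Sim. c \<delta> *\<^sub>R \<delta>) \<gamma> = (\<Sum>\<delta>\<in>Sim. c \<delta> * representation Sim \<delta> \<gamma>)"
    by (simp add: representation_sum representation_scale independent_simple span_base span_scale)
  also have "\<dots> = c \<gamma>"
    using assms finite_simple by (simp add: representation_basis independent_simple if_distrib cong: if_cong)
  finally show ?thesis .
qed

lemma pos_roots_iff:
  "\<beta> \<in> pos_roots \<Phi> Sim \<longleftrightarrow> \<beta> \<in> \<Phi> \<and> (\<forall>\<gamma>\<in>Sim. 0 \<le> representation Sim \<beta> \<gamma>)"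
proof -
  have "nonneg_comb Sim \<beta> \<longleftrightarrow> (\<forall>\<gamma>\<in>Sim. 0 \<le> representation Sim \<beta> \<gamma>)" if "\<beta> \<in> span Sim"
  proof
    show "nonneg_comb Sim \<beta> \<Longrightarrow> \<forall>\<gamma>\<in>Sim. 0 \<le> representation Sim \<beta> \<gamma>"
      unfolding nonneg_comb_def by (auto simp: representation_sum_scaleR)
    show "\<forall>\<gamma>\<in>Sim. 0 \<le> representation Sim \<beta> \<gamma> \<Longrightarrow> nonneg_comb Sim \<beta>"
      unfolding nonneg_comb_def
      using sum_representation_eq[OF independent_simple that finite_simple subset_refl] by metis
  qed
  then show ?thesis unfolding pos_roots_def using roots_in_span by blast
qed

lemma finite_pos_roots: "finite (pos_roots \<Phi> Sim)"
  using finite_roots unfolding pos_roots_def by simp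

lemma root_pos_or_neg: "\<beta> \<in> \<Phi> \<Longrightarrow> \<beta> \<in> pos_roots \<Phi> Sim \<or> - \<beta> \<in> pos_roots \<Phi> Sim"
  using simple_system uminus_root unfolding simple_system_def pos_roots_def by blast

lemma uminus_pos_root_not_pos:
  assumes "\<beta> \<in> pos_roots \<Phi> Sim"
  shows "- \<beta> \<notin> pos_roots \<Phi> Sim"
proof
  assume "- \<beta> \<in> pos_roots \<Phi> Sim"
  have \<beta>: "\<beta> \<in> \<Phi>" using assms pos_roots_iff by blast
  then have "representation Sim (- \<beta>) = (\<lambda>\<gamma>. - representation Sim \<beta> \<gamma>)"
    by (simp add: representation_neg independent_simple roots_in_span)
  then have "\<forall>\<gamma>\<in>Sim. representation Sim \<beta> \<gamma> = 0"
    using assms \<open>- \<beta> \<in> pos_roots \<Phi> Sim\<close> unfolding pos_roots_iff by force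
  then have "\<beta> = 0"
    using sum_representation_eq[OF independent_simple roots_in_span[OF \<beta>] finite_simple subset_refl] by simp
  then show False using \<beta> zero_notin_roots by simp
qed

lemma simple_pos_root: "\<alpha> \<in> Sim \<Longrightarrow> \<alpha> \<in> pos_roots \<Phi> Sim"
  using simple_subset_roots by (auto simp: pos_roots_iff representation_basis independent_simple)

lemma representation_refl:
  assumes "\<alpha> \<in> Sim" and "\<beta> \<in> span Sim"
  shows "representation Sim (refl \<alpha> \<beta>) \<gamma> = representation Sim \<beta> \<gamma> - (if \<gamma> = \<alpha> then coroot \<alpha> \<beta> else 0)"
  using assms unfolding refl_def
  by (simp add: representation_diff representation_scale representation_basis span_base span_scale independent_simple)

lemma refl_pos_root:
  assumes \<alpha>: "\<alpha> \<in> Sim" and \<beta>: "\<beta> \<in> pos_roots \<Phi> Sim" and "\<beta> \<noteq> \<alpha>"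
  shows "refl \<alpha> \<beta> \<in> pos_roots \<Phi> Sim"
proof -
  have \<alpha>\<Phi>: "\<alpha> \<in> \<Phi>" using \<alpha> simple_subset_roots by blast
  have \<beta>\<Phi>: "\<beta> \<in> \<Phi>" and nonneg: "\<forall>\<gamma>\<in>Sim. 0 \<le> representation Sim \<beta> \<gamma>"
    using \<beta> pos_roots_iff by auto
  have "\<exists>\<gamma>\<in>Sim. \<gamma> \<noteq> \<alpha> \<and> representation Sim \<beta> \<gamma> \<noteq> 0"
  proof (rule ccontr)
    assume only_\<alpha>: "\<not> (\<exists>\<gamma>\<in>Sim. \<gamma> \<noteq> \<alpha> \<and> representation Sim \<beta> \<gamma> \<noteq> 0)"
    have "\<beta> = (\<Sum>\<gamma>\<in>Sim. representation Sim \<beta> \<gamma> *\<^sub>R \<gamma>)"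
      using sum_representation_eq[OF independent_simple roots_in_span[OF \<beta>\<Phi>] finite_simple subset_refl] by simp
    also have "\<dots> = (\<Sum>\<gamma>\<in>Sim. if \<gamma> = \<alpha> then representation Sim \<beta> \<alpha> *\<^sub>R \<alpha> else 0)"
      by (rule sum.cong) (use only_\<alpha> in auto)
    also have "\<dots> = representation Sim \<beta> \<alpha> *\<^sub>R \<alpha>"
      using \<alpha> finite_simple by simp
    finally have "\<beta> = \<alpha> \<or> \<beta> = - \<alpha>"
      using root_multiple[OF \<alpha>\<Phi>, of "representation Sim \<beta> \<alpha>"] \<beta>\<Phi> by auto
    then show False
      using \<open>\<beta> \<noteq> \<alpha>\<close> \<beta> uminus_pos_root_not_pos[OF simple_pos_root[OF \<alpha>]] by blast
  qed
  then obtain \<gamma> where \<gamma>: "\<gamma> \<in> Sim" "\<gamma> \<noteq> \<alpha>" "0 < representation Sim \<beta> \<gamma>"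
    using nonneg by force
  have "representation Sim (- refl \<alpha> \<beta>) \<gamma> = - representation Sim \<beta> \<gamma>"
    using representation_neg[OF independent_simple roots_in_span[OF refl_root[OF \<alpha>\<Phi> \<beta>\<Phi>]]]
      representation_refl[OF \<alpha> roots_in_span[OF \<beta>\<Phi>]] \<gamma>(2) by simp
  then have "- refl \<alpha> \<beta> \<notin> pos_roots \<Phi> Sim"
    using \<gamma> pos_roots_iff by force
  then show ?thesis
    using root_pos_or_neg refl_root[OF \<alpha>\<Phi> \<beta>\<Phi>] by blast
qed

lemma refl_permutes_pos_roots:
  assumes \<alpha>: "\<alpha> \<in> Sim"
  shows "refl \<alpha> ` (pos_roots \<Phi> Sim - {\<alpha>}) = pos_roots \<Phi> Sim - {\<alpha>}"
proof -
  have \<alpha>0: "\<alpha> \<noteq> 0" using \<alpha> simple_subset_roots zero_notin_roots by blast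
  have maps_to: "refl \<alpha> \<beta> \<in> pos_roots \<Phi> Sim - {\<alpha>}" if \<beta>: "\<beta> \<in> pos_roots \<Phi> Sim - {\<alpha>}" for \<beta>
  proof -
    have "refl \<alpha> \<beta> \<noteq> \<alpha>"
    proof
      assume "refl \<alpha> \<beta> = \<alpha>"
      then have "\<beta> = - \<alpha>" using refl_refl[OF \<alpha>0, of \<beta>] refl_self[OF \<alpha>0] by simp
      then show False using \<beta> uminus_pos_root_not_pos[OF simple_pos_root[OF \<alpha>]] by simp
    qed
    then show ?thesis using refl_pos_root[OF \<alpha>] \<beta> by blast
  qed
  show ?thesis
  proof
    show "refl \<alpha> ` (pos_roots \<Phi> Sim - {\<alpha>}) \<subseteq> pos_roots \<Phi> Sim - {\<alpha>}"
      by (rule image_subsetI) (rule maps_to)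
    show "pos_roots \<Phi> Sim - {\<alpha>} \<subseteq> refl \<alpha> ` (pos_roots \<Phi> Sim - {\<alpha>})"
    proof
      fix \<beta> assume "\<beta> \<in> pos_roots \<Phi> Sim - {\<alpha>}"
      then have "refl \<alpha> (refl \<alpha> \<beta>) \<in> refl \<alpha> ` (pos_roots \<Phi> Sim - {\<alpha>})"
        using maps_to by blast
      then show "\<beta> \<in> refl \<alpha> ` (pos_roots \<Phi> Sim - {\<alpha>})"
        by (simp only: refl_refl[OF \<alpha>0])
    qed
  qed
qed

lemma refl_permutes_neg_roots:
  assumes "\<alpha> \<in> Sim"
  shows "refl \<alpha> ` (neg_roots \<Phi> Sim - {- \<alpha>}) = neg_roots \<Phi> Sim - {- \<alpha>}"
proof -
  have "neg_roots \<Phi> Sim - {- \<alpha>} = uminus ` (pos_roots \<Phi> Sim - {\<alpha>})"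
    unfolding neg_roots_def by auto
  moreover have "refl \<alpha> ` uminus ` A = uminus ` refl \<alpha> ` A" for A
    by (simp add: image_image refl_uminus)
  ultimately show ?thesis using refl_permutes_pos_roots[OF assms] by simp
qed

lemma neg_roots_subset: "neg_roots \<Phi> Sim \<subseteq> \<Phi>"
  unfolding neg_roots_def pos_roots_def using uminus_root by blast

lemma uminus_simple_neg_root: "\<alpha> \<in> Sim \<Longrightarrow> - \<alpha> \<in> neg_roots \<Phi> Sim"
  unfolding neg_roots_def using simple_pos_root by blast

lemma exists_simple_inner_pos:
  assumes \<beta>: "\<beta> \<in> pos_roots \<Phi> Sim"
  shows "\<exists>\<alpha>\<in>Sim. 0 < \<alpha> \<bullet> \<beta>"
proof (rule ccontr)
  assume "\<not> ?thesis"
  then have nonpos: "\<forall>\<alpha>\<in>Sim. \<alpha> \<bullet> \<beta> \<le> 0" by auto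
  have \<beta>\<Phi>: "\<beta> \<in> \<Phi>" and nonneg: "\<forall>\<gamma>\<in>Sim. 0 \<le> representation Sim \<beta> \<gamma>"
    using \<beta> pos_roots_iff by auto
  have "\<beta> \<bullet> \<beta> = (\<Sum>\<gamma>\<in>Sim. representation Sim \<beta> \<gamma> * (\<gamma> \<bullet> \<beta>))"
    by (subst (1) sum_representation_eq[OF independent_simple roots_in_span[OF \<beta>\<Phi>] finite_simple subset_refl, symmetric])
       (simp add: inner_sum_left)
  also have "\<dots> \<le> 0"
    using nonneg nonpos by (intro sum_nonpos) (simp add: mult_nonneg_nonpos)
  finally have "\<beta> \<bullet> \<beta> = 0" using inner_ge_zero[of \<beta>] by linarith
  then show False using \<beta>\<Phi> zero_notin_roots by simp
qed

definition height :: "'n vec \<Rightarrow> real" where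
  "height \<beta> = (\<Sum>\<gamma>\<in>Sim. representation Sim \<beta> \<gamma>)"

lemma height_refl:
  assumes "\<alpha> \<in> Sim" and "\<beta> \<in> span Sim"
  shows "height (refl \<alpha> \<beta>) = height \<beta> - coroot \<alpha> \<beta>"
  using assms finite_simple by (simp add: height_def representation_refl sum_subtractf)

lemma pos_roots_in_root_lattice:
  assumes "\<beta> \<in> pos_roots \<Phi> Sim"
  shows "\<beta> \<in> root_lattice \<Phi> Sim"
  using finite_pos_roots assms
proof (induction \<beta> rule: finite_measure_induct[where f = height])
  case (less \<beta>)
  show ?case
  proof (cases "\<beta> \<in> Sim")
    case True
    then show ?thesis
      using scaleR_in_span_over[OF finite_simple True zero_in_coeff_ring cr_one]
      by (simp add: root_lattice_def)
  next
    case False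
    obtain \<alpha> where \<alpha>: "\<alpha> \<in> Sim" "0 < \<alpha> \<bullet> \<beta>"
      using exists_simple_inner_pos[OF less(1)] by blast
    have \<alpha>\<Phi>: "\<alpha> \<in> \<Phi>" and \<beta>\<Phi>: "\<beta> \<in> \<Phi>"
      using \<alpha>(1) simple_subset_roots less(1) pos_roots_iff by auto
    have "0 < \<alpha> \<bullet> \<alpha>"
      using \<alpha>\<Phi> zero_notin_roots by auto
    then have "0 < coroot \<alpha> \<beta>"
      using \<alpha>(2) by (simp add: coroot_def)
    then have "height (refl \<alpha> \<beta>) < height \<beta>"
      using height_refl[OF \<alpha>(1) roots_in_span[OF \<beta>\<Phi>]] by simp
    moreover have "refl \<alpha> \<beta> \<in> pos_roots \<Phi> Sim"
      using refl_pos_root[OF \<alpha>(1) less(1)] False \<alpha>(1) by blast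
    ultimately have "refl \<alpha> \<beta> \<in> root_lattice \<Phi> Sim"
      using less(2) by blast
    moreover have "coroot \<alpha> \<beta> *\<^sub>R \<alpha> \<in> root_lattice \<Phi> Sim"
      unfolding root_lattice_def
      by (rule scaleR_in_span_over[OF finite_simple \<alpha>(1) zero_in_coeff_ring cr_gen[OF \<alpha>\<Phi> \<beta>\<Phi>]])
    moreover have "\<beta> = refl \<alpha> \<beta> + coroot \<alpha> \<beta> *\<^sub>R \<alpha>"
      by (simp add: refl_def)
    ultimately show ?thesis
      unfolding root_lattice_def using span_over_add[OF cr_add] by metis
  qed
qed

lemma roots_in_root_lattice: "\<beta> \<in> \<Phi> \<Longrightarrow> \<beta> \<in> root_lattice \<Phi> Sim"
  using root_pos_or_neg pos_roots_in_root_lattice span_over_uminus[OF cr_neg]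
  unfolding root_lattice_def by (metis minus_minus)

end

section \<open>The push-forward pairing\<close>

lemma qinv_eqI: "(a::'q::comm_ring_1) * b = 1 \<Longrightarrow> qinv a = b"
  unfolding qinv_def by (rule the_equality) (auto, metis mult.assoc mult.commute mult_1_right)

lemma mult_qinv: "(a::'q::comm_ring_1) dvd 1 \<Longrightarrow> a * qinv a = 1"
  by (metis dvdE qinv_eqI)

lemma qinv_mult: "(a::'q::comm_ring_1) dvd 1 \<Longrightarrow> b dvd 1 \<Longrightarrow> qinv (a * b) = qinv a * qinv b"
  by (rule qinv_eqI) (metis mult_qinv mult.assoc mult.left_commute mult_1_right)

locale hecke_setting = simple_root_system \<Phi> Sim
  for \<Phi> Sim :: "'n::finite vec set" +
  fixes \<Lambda> :: "'n vec set" and S :: "'q::comm_ring_1 set"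
    and x :: "'n vec \<Rightarrow> 'q" and act :: "('n vec \<Rightarrow> 'n vec) \<Rightarrow> 'q \<Rightarrow> 'q"
  assumes roots_in_lattice: "\<Phi> \<subseteq> \<Lambda>"
    and unit_x: "\<And>\<alpha>. \<alpha> \<in> \<Phi> \<Longrightarrow> x \<alpha> dvd 1"
    and action: "weyl_ring_action (weyl \<Phi>) \<Lambda> S x act"
begin

abbreviation W where "W \<equiv> weyl \<Phi>"

lemma finite_W: "finite W"
  using finite_weyl[OF root_system] .

lemma act_comp: "v \<in> W \<Longrightarrow> w \<in> W \<Longrightarrow> act (v \<circ> w) a = act v (act w a)"
  using action unfolding weyl_ring_action_def by blast

lemma act_one: "w \<in> W \<Longrightarrow> act w 1 = 1"
  using action unfolding weyl_ring_action_def by blast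

lemma act_add: "w \<in> W \<Longrightarrow> act w (a + b) = act w a + act w b"
  using action unfolding weyl_ring_action_def by blast

lemma act_mult: "w \<in> W \<Longrightarrow> act w (a * b) = act w a * act w b"
  using action unfolding weyl_ring_action_def by blast

lemma act_x_root: "w \<in> W \<Longrightarrow> \<beta> \<in> \<Phi> \<Longrightarrow> act w (x \<beta>) = x (w \<beta>)"
  using action roots_in_lattice unfolding weyl_ring_action_def by blast

lemma act_zero: "w \<in> W \<Longrightarrow> act w 0 = 0"
  using act_add[of w 0 0] by simp

lemma act_sum: "w \<in> W \<Longrightarrow> act w (sum f A) = (\<Sum>a\<in>A. act w (f a))"
  by (induction A rule: infinite_finite_induct) (simp_all add: act_zero act_add)

lemma act_prod: "w \<in> W \<Longrightarrow> act w (prod f A) = (\<Prod>a\<in>A. act w (f a))"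
  by (induction A rule: infinite_finite_induct) (simp_all add: act_one act_mult)

lemma is_unit_act:
  assumes "w \<in> W" and "a dvd 1"
  shows "act w a dvd 1"
proof -
  obtain k where "1 = a * k" using assms(2) by (rule dvdE)
  then have "1 = act w a * act w k" using act_mult[OF assms(1)] act_one[OF assms(1)] by metis
  then show ?thesis by (rule dvdI)
qed

lemma act_qinv:
  assumes "w \<in> W" and "a dvd 1"
  shows "act w (qinv a) = qinv (act w a)"
  using act_mult[OF assms(1), of a "qinv a"] mult_qinv[OF assms(2)] act_one[OF assms(1)]
  by (metis qinv_eqI)

lemma finite_neg_roots: "finite (neg_roots \<Phi> Sim)"
  using finite_subset[OF neg_roots_subset finite_roots] .

lemma is_unit_xPi: "xPi \<Phi> Sim x dvd 1"
proof -
  have "xPi \<Phi> Sim x dvd (\<Prod>\<beta>\<in>neg_roots \<Phi> Sim. 1)"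
    unfolding xPi_def by (rule prod_dvd_prod) (use unit_x neg_roots_subset in blast)
  then show ?thesis by simp
qed

text \<open>The simple reflection \<open>s\<^sub>\<alpha>\<close> permutes the negative roots other than \<open>-\<alpha>\<close> and swaps
  \<open>-\<alpha>\<close> with \<open>\<alpha>\<close>, so it maps \<open>x\<^sub>\<Pi>\<close> to \<open>x\<^sub>\<Pi> x\<^sub>\<alpha> / x\<^sub>-\<^sub>\<alpha>\<close>.\<close>
lemma act_refl_xPi_mult_x:
  assumes \<alpha>: "\<alpha> \<in> Sim"
  shows "act (refl \<alpha>) (xPi \<Phi> Sim x * x \<alpha>) = xPi \<Phi> Sim x * x \<alpha>"
proof -
  let ?N = "neg_roots \<Phi> Sim - {- \<alpha>}"
  have \<alpha>\<Phi>: "\<alpha> \<in> \<Phi>" using \<alpha> simple_subset_roots by blast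
  have \<alpha>0: "\<alpha> \<noteq> 0" using \<alpha>\<Phi> zero_notin_roots by blast
  have s: "refl \<alpha> \<in> W" using refl_in_weyl[OF \<alpha>\<Phi>] .
  have xPi_split: "xPi \<Phi> Sim x = x (- \<alpha>) * (\<Prod>\<beta>\<in>?N. x \<beta>)"
    unfolding xPi_def using prod.remove[OF finite_neg_roots uminus_simple_neg_root[OF \<alpha>]] .
  have "act (refl \<alpha>) (\<Prod>\<beta>\<in>?N. x \<beta>) = (\<Prod>\<beta>\<in>?N. act (refl \<alpha>) (x \<beta>))"
    by (rule act_prod[OF s])
  also have "\<dots> = (\<Prod>\<beta>\<in>?N. x (refl \<alpha> \<beta>))"
    by (rule prod.cong) (use act_x_root[OF s] neg_roots_subset in auto)
  also have "\<dots> = (\<Prod>\<beta>\<in>refl \<alpha> ` ?N. x \<beta>)"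
    by (rule prod.reindex[OF inj_on_subset[OF bij_is_inj[OF bij_refl[OF \<alpha>0]] subset_UNIV],
          symmetric, unfolded comp_def])
  also have "\<dots> = (\<Prod>\<beta>\<in>?N. x \<beta>)"
    by (simp only: refl_permutes_neg_roots[OF \<alpha>])
  finally have "act (refl \<alpha>) (\<Prod>\<beta>\<in>?N. x \<beta>) = (\<Prod>\<beta>\<in>?N. x \<beta>)" .
  moreover have "act (refl \<alpha>) (x (- \<alpha>)) = x \<alpha>" "act (refl \<alpha>) (x \<alpha>) = x (- \<alpha>)"
    using \<alpha>\<Phi> by (simp_all add: act_x_root[OF s] uminus_root refl_self[OF \<alpha>0] refl_uminus)
  ultimately show ?thesis
    unfolding xPi_split by (simp add: act_mult[OF s] ac_simps)
qed

definition pairing :: "(('n vec \<Rightarrow> 'n vec) \<Rightarrow> 'q) \<Rightarrow> (('n vec \<Rightarrow> 'n vec) \<Rightarrow> 'q) \<Rightarrow> 'q" where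
  "pairing f g = (\<Sum>t\<in>W. qinv (act t (xPi \<Phi> Sim x)) * (f t * g t))"

lemma pairing_cong:
  "(\<And>t. t \<in> W \<Longrightarrow> f t = f' t) \<Longrightarrow> (\<And>t. t \<in> W \<Longrightarrow> g t = g' t) \<Longrightarrow> pairing f g = pairing f' g'"
  unfolding pairing_def by (rule sum.cong) simp_all

lemma pairing_weight:
  assumes "t \<in> W" and "\<alpha> \<in> \<Phi>"
  shows "qinv (act t (xPi \<Phi> Sim x)) * act t (qinv (x \<alpha>)) = qinv (act t (xPi \<Phi> Sim x * x \<alpha>))"
  using assms
  by (simp add: act_qinv unit_x act_mult qinv_mult is_unit_act is_unit_xPi)

lemma hecke_Yop:
  assumes "\<alpha> \<in> \<Phi>" and t: "t \<in> W"
  shows "hecke W act (Yop x \<alpha>) f t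
    = act t (qinv (x (- \<alpha>))) * f t + act t (qinv (x \<alpha>)) * f (t \<circ> refl \<alpha>)"
proof -
  have "hecke W act (Yop x \<alpha>) f t
      = (\<Sum>w\<in>W. (if w = id then act t (qinv (x (- \<alpha>))) * f (t \<circ> w) else 0)
          + (if w = refl \<alpha> then act t (qinv (x \<alpha>)) * f (t \<circ> w) else 0))"
    unfolding hecke_def
    by (rule sum.cong) (auto simp: Yop_def act_add[OF t] act_zero[OF t] distrib_right)
  also have "\<dots> = act t (qinv (x (- \<alpha>))) * f t + act t (qinv (x \<alpha>)) * f (t \<circ> refl \<alpha>)"
    unfolding sum.distrib using finite_W refl_in_weyl[OF assms(1)] by (simp add: weyl.weyl_id)
  finally show ?thesis .
qed

text \<open>Reindexing by \<open>t \<mapsto> t s\<^sub>\<alpha>\<close>, under which the weight of the twisted term is invariant,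
  moves \<open>s\<^sub>\<alpha>\<close> from one argument to the other.\<close>
lemma pairing_hecke_Yop:
  assumes \<alpha>: "\<alpha> \<in> Sim"
  shows "pairing (hecke W act (Yop x \<alpha>) f) g = pairing f (hecke W act (Yop x \<alpha>) g)"
proof -
  let ?s = "refl \<alpha>"
  have \<alpha>\<Phi>: "\<alpha> \<in> \<Phi>" using \<alpha> simple_subset_roots by blast
  have s: "?s \<in> W" using refl_in_weyl[OF \<alpha>\<Phi>] .
  have ss: "t \<circ> ?s \<circ> ?s = t" for t :: "'n vec \<Rightarrow> 'n vec"
    using refl_comp_refl \<alpha>\<Phi> zero_notin_roots by (metis comp_assoc comp_id)
  define c where "c t = qinv (act t (xPi \<Phi> Sim x)) * act t (qinv (x \<alpha>))" for t
  define S0 where "S0 = (\<Sum>t\<in>W. qinv (act t (xPi \<Phi> Sim x)) * act t (qinv (x (- \<alpha>))) * f t * g t)"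
  have c_refl: "c (t \<circ> ?s) = c t" if "t \<in> W" for t
  proof -
    have "c (t \<circ> ?s) = qinv (act (t \<circ> ?s) (xPi \<Phi> Sim x * x \<alpha>))"
      unfolding c_def by (rule pairing_weight[OF weyl_comp_closed[OF that s] \<alpha>\<Phi>])
    also have "\<dots> = qinv (act t (xPi \<Phi> Sim x * x \<alpha>))"
      by (simp only: act_comp[OF that s] act_refl_xPi_mult_x[OF \<alpha>])
    also have "\<dots> = c t"
      unfolding c_def by (rule pairing_weight[OF that \<alpha>\<Phi>, symmetric])
    finally show ?thesis .
  qed
  have "pairing (hecke W act (Yop x \<alpha>) f) g = S0 + (\<Sum>t\<in>W. c t * f (t \<circ> ?s) * g t)"
    unfolding pairing_def S0_def sum.distrib[symmetric]
    by (rule sum.cong) (simp_all add: hecke_Yop[OF \<alpha>\<Phi>] c_def algebra_simps)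
  moreover have "pairing f (hecke W act (Yop x \<alpha>) g) = S0 + (\<Sum>t\<in>W. c t * f t * g (t \<circ> ?s))"
    unfolding pairing_def S0_def sum.distrib[symmetric]
    by (rule sum.cong) (simp_all add: hecke_Yop[OF \<alpha>\<Phi>] c_def algebra_simps)
  moreover have "(\<Sum>t\<in>W. c t * f t * g (t \<circ> ?s)) = (\<Sum>t\<in>W. c t * f (t \<circ> ?s) * g t)"
  proof -
    have "(\<Sum>t\<in>W. c t * f t * g (t \<circ> ?s)) = (\<Sum>t\<in>W. c (t \<circ> ?s) * f (t \<circ> ?s) * g (t \<circ> ?s \<circ> ?s))"
      using sum.reindex_bij_betw[OF bij_betw_weyl_comp_right[OF zero_notin_roots s],
          of "\<lambda>t. c t * f t * g (t \<circ> ?s)"] by simp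
    also have "\<dots> = (\<Sum>t\<in>W. c t * f (t \<circ> ?s) * g t)"
      by (rule sum.cong) (simp_all add: c_refl ss)
    finally show ?thesis .
  qed
  ultimately show ?thesis by simp
qed

lemma sum_comp_fibres:
  assumes "u \<in> W"
  shows "(\<Sum>r\<in>W. \<Sum>w\<in>{w\<in>W. u \<circ> w = r}. H w r) = (\<Sum>w\<in>W. H w (u \<circ> w))"
proof -
  have "(\<Sum>r\<in>W. \<Sum>w\<in>{w\<in>W. u \<circ> w = r}. H w r) = (\<Sum>r\<in>W. \<Sum>w\<in>W. if u \<circ> w = r then H w r else 0)"
    by (rule sum.cong) (simp_all add: sum.inter_filter[OF finite_W])
  also have "\<dots> = (\<Sum>w\<in>W. \<Sum>r\<in>W. if u \<circ> w = r then H w r else 0)"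
    by (rule sum.swap)
  also have "\<dots> = (\<Sum>w\<in>W. H w (u \<circ> w))"
    by (rule sum.cong) (simp_all add: finite_W weyl_comp_closed[OF assms])
  finally show ?thesis .
qed

lemma hecke_qw_mult:
  assumes t: "t \<in> W"
  shows "hecke W act (qw_mult W act A B) f t = hecke W act A (hecke W act B f) t"
proof -
  have "hecke W act (qw_mult W act A B) f t
      = (\<Sum>r\<in>W. \<Sum>u\<in>W. \<Sum>w\<in>{w\<in>W. u \<circ> w = r}. act t (A u) * act (t \<circ> u) (B w) * f (t \<circ> r))"
    unfolding hecke_def qw_mult_def
    by (rule sum.cong) (simp_all add: act_sum[OF t] act_mult[OF t] act_comp[OF t] sum_distrib_right)
  also have "\<dots> = (\<Sum>u\<in>W. \<Sum>r\<in>W. \<Sum>w\<in>{w\<in>W. u \<circ> w = r}. act t (A u) * act (t \<circ> u) (B w) * f (t \<circ> r))"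
    by (rule sum.swap)
  also have "\<dots> = (\<Sum>u\<in>W. \<Sum>w\<in>W. act t (A u) * act (t \<circ> u) (B w) * f (t \<circ> (u \<circ> w)))"
    by (rule sum.cong) (simp_all add: sum_comp_fibres)
  also have "\<dots> = hecke W act A (hecke W act B f) t"
    unfolding hecke_def by (rule sum.cong) (simp_all add: sum_distrib_left comp_assoc mult.assoc)
  finally show ?thesis .
qed

lemma hecke_qw_delta_id:
  assumes t: "t \<in> W"
  shows "hecke W act (qw_delta id) f t = f t"
proof -
  have "hecke W act (qw_delta id) f t = (\<Sum>w\<in>W. if w = id then f t else 0)"
    unfolding hecke_def qw_delta_def by (rule sum.cong) (simp_all add: act_one[OF t] act_zero[OF t])
  then show ?thesis using finite_W by (simp add: weyl.weyl_id)
qed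

lemma hecke_cong:
  "t \<in> W \<Longrightarrow> (\<And>r. r \<in> W \<Longrightarrow> f r = g r) \<Longrightarrow> hecke W act c f t = hecke W act c g t"
  unfolding hecke_def by (rule sum.cong) (simp_all add: weyl_comp_closed)

text \<open>Working with the iterated action of the letters instead of the product \<open>Y\<^sub>J\<close> in \<open>Q\<^sub>W\<close>
  spares us the associativity of \<open>qw_mult\<close>.\<close>
definition hecke_word :: "'n vec list \<Rightarrow> (('n vec \<Rightarrow> 'n vec) \<Rightarrow> 'q) \<Rightarrow> ('n vec \<Rightarrow> 'n vec) \<Rightarrow> 'q" where
  "hecke_word J f = foldr (\<lambda>\<alpha> g. hecke W act (Yop x \<alpha>) g) J f"

lemma hecke_Yword: "t \<in> W \<Longrightarrow> hecke W act (Yword W act x J) f t = hecke_word J f t"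
proof (induction J arbitrary: t)
  case Nil
  then show ?case by (simp add: Yword_def hecke_word_def hecke_qw_delta_id)
next
  case (Cons \<alpha> J)
  have "hecke W act (Yword W act x (\<alpha> # J)) f t
      = hecke W act (Yop x \<alpha>) (hecke W act (Yword W act x J) f) t"
    unfolding Yword_def using hecke_qw_mult[OF Cons.prems] by simp
  also have "\<dots> = hecke W act (Yop x \<alpha>) (hecke_word J f) t"
    by (rule hecke_cong[OF Cons.prems Cons.IH])
  finally show ?case by (simp add: hecke_word_def)
qed

lemma pairing_hecke_word: "set J \<subseteq> Sim \<Longrightarrow> pairing (hecke_word J f) g = pairing f (hecke_word (rev J) g)"
proof (induction J arbitrary: f g)
  case Nil
  then show ?case by (simp add: hecke_word_def)
next
  case (Cons \<alpha> J)
  have "pairing (hecke_word (\<alpha> # J) f) g = pairing (hecke W act (Yop x \<alpha>) (hecke_word J f)) g"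
    by (simp add: hecke_word_def)
  also have "\<dots> = pairing (hecke_word J f) (hecke W act (Yop x \<alpha>) g)"
    using Cons.prems by (simp add: pairing_hecke_Yop)
  also have "\<dots> = pairing f (hecke_word (rev J) (hecke W act (Yop x \<alpha>) g))"
    using Cons by simp
  also have "\<dots> = pairing f (hecke_word (rev (\<alpha> # J)) g)"
    by (simp add: hecke_word_def)
  finally show ?case .
qed

lemma pairing_hecke_Yword:
  "set J \<subseteq> Sim \<Longrightarrow>
    pairing (hecke W act (Yword W act x J) f) g = pairing f (hecke W act (Yword W act x (rev J)) g)"
  using pairing_hecke_word by (simp add: hecke_Yword cong: pairing_cong)

lemma class_v_apply:
  assumes v: "v \<in> W"
  shows "class_v W act (xPi \<Phi> Sim x) v u = (if u = v then act v (xPi \<Phi> Sim x) else 0)"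
proof -
  have "class_v W act (xPi \<Phi> Sim x) v u
      = (\<Sum>w\<in>W. if w = v then act v (class_e (xPi \<Phi> Sim x) (inv v \<circ> u)) else 0)"
    unfolding class_v_def weyl_act_def qw_delta_def by (rule sum.cong) simp_all
  then have "class_v W act (xPi \<Phi> Sim x) v u = act v (class_e (xPi \<Phi> Sim x) (inv v \<circ> u))"
    using finite_W v by simp
  moreover have "inv v \<circ> u = id \<longleftrightarrow> u = v"
  proof
    have "bij v" using bij_weyl[OF zero_notin_roots v] .
    show "u = v" if "inv v \<circ> u = id"
    proof -
      have "v \<circ> inv v \<circ> u = v" using that by (simp add: comp_assoc)
      then show "u = v" using \<open>bij v\<close> by (simp add: surj_iff[THEN iffD1, OF bij_is_surj])
    qed
    show "u = v \<Longrightarrow> inv v \<circ> u = id"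
      using \<open>bij v\<close> by (simp add: bij_is_inj inv_o_cancel)
  qed
  ultimately show ?thesis unfolding class_e_def using act_zero[OF v] by auto
qed

lemma pairing_class_v:
  assumes v: "v \<in> W"
  shows "pairing (class_v W act (xPi \<Phi> Sim x) v) g = g v"
proof -
  have "pairing (class_v W act (xPi \<Phi> Sim x) v) g
      = (\<Sum>t\<in>W. if t = v then qinv (act v (xPi \<Phi> Sim x)) * act v (xPi \<Phi> Sim x) * g v else 0)"
    unfolding pairing_def by (rule sum.cong) (simp_all add: class_v_apply[OF v] mult.assoc)
  also have "\<dots> = g v"
    using finite_W v mult_qinv[OF is_unit_act[OF v is_unit_xPi]] by (simp add: mult.commute)
  finally show ?thesis .
qed

lemma hecke_pi_zprod:
  assumes "\<And>r. r \<notin> W \<Longrightarrow> f r * g r = 0"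
  shows "hecke W act (pi_elt act (xPi \<Phi> Sim x)) (zprod f g) = (\<lambda>u. pairing f g * zone W u)"
proof
  fix u
  show "hecke W act (pi_elt act (xPi \<Phi> Sim x)) (zprod f g) u = pairing f g * zone W u"
  proof (cases "u \<in> W")
    case True
    have "hecke W act (pi_elt act (xPi \<Phi> Sim x)) (zprod f g) u
        = (\<Sum>w\<in>W. qinv (act (u \<circ> w) (xPi \<Phi> Sim x)) * (f (u \<circ> w) * g (u \<circ> w)))"
      unfolding hecke_def pi_elt_def zprod_def
      by (rule sum.cong) (simp_all add: act_qinv[OF True is_unit_act[OF _ is_unit_xPi]] act_comp[OF True])
    also have "\<dots> = pairing f g"
      unfolding pairing_def by (rule sum.reindex_bij_betw[OF bij_betw_weyl_comp_left[OF zero_notin_roots True]])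
    finally show ?thesis using True by (simp add: zone_def)
  next
    case False
    have "u \<circ> w \<notin> W" if w: "w \<in> W" for w
    proof
      assume "u \<circ> w \<in> W"
      then have "u \<circ> w \<circ> inv w \<in> W"
        by (rule weyl_comp_closed[OF _ inv_in_weyl[OF zero_notin_roots w]])
      moreover have "u \<circ> w \<circ> inv w = u"
        using bij_weyl[OF zero_notin_roots w] by (simp add: comp_assoc surj_iff[THEN iffD1, OF bij_is_surj])
      ultimately show False
        using False by simp
    qed
    then show ?thesis
      using False assms unfolding hecke_def zprod_def zone_def by simp
  qed
qed

end

theorem lemma3p5:
  fixes \<Phi> Sim \<Lambda> :: "('n::finite) vec set"
    and S :: "'q::comm_ring_1 set"
    and x :: "'n vec \<Rightarrow> 'q"
    and act :: "('n vec \<Rightarrow> 'n vec) \<Rightarrow> 'q \<Rightarrow> 'q"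
    and z :: "('n vec \<Rightarrow> 'n vec) \<Rightarrow> 'q"
    and v w :: "'n vec \<Rightarrow> 'n vec"
    and I :: "'n vec list"
  assumes root: "root_system \<Phi>"
    and simple: "simple_system \<Phi> Sim"
    and lattice: "admissible_lattice \<Phi> Sim \<Lambda>"
    and S_ring: "subring_of S"
    and x_in_S: "\<forall>l\<in>\<Lambda>. x l \<in> S"
    and x_zero: "x 0 = 0"
    and x_unit: "\<forall>\<alpha>\<in>\<Phi>. \<exists>b. x \<alpha> * b = 1"
    and action: "weyl_ring_action (weyl \<Phi>) \<Lambda> S x act"
    and regular: "\<forall>\<alpha>\<in>pos_roots \<Phi> Sim. \<forall>f\<in>S. x \<alpha> * f = 0 \<longrightarrow> f = 0"
    and divis: "\<forall>\<alpha>\<in>pos_roots \<Phi> Sim. \<forall>\<alpha>'\<in>pos_roots \<Phi> Sim. \<forall>f\<in>S. \<alpha> \<noteq> \<alpha>' \<longrightarrow>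
                  (\<exists>g\<in>S. x \<alpha>' * f = x \<alpha> * g) \<longrightarrow> (\<exists>g\<in>S. f = x \<alpha> * g)"
    and z_in: "z \<in> struct_alg (weyl \<Phi>) (pos_roots \<Phi> Sim) S x"
    and v_in: "v \<in> weyl \<Phi>"
    and w_in: "w \<in> weyl \<Phi>"
    and red: "reduced_word Sim I w"
  shows "hecke (weyl \<Phi>) act (pi_elt act (xPi \<Phi> Sim x))
           (zprod (hecke (weyl \<Phi>) act (Yword (weyl \<Phi>) act x (rev I)) (class_v (weyl \<Phi>) act (xPi \<Phi> Sim x) v)) z)
       = hecke (weyl \<Phi>) act (pi_elt act (xPi \<Phi> Sim x))
           (zprod (class_v (weyl \<Phi>) act (xPi \<Phi> Sim x) v) (hecke (weyl \<Phi>) act (Yword (weyl \<Phi>) act x I) z))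
     \<and> hecke (weyl \<Phi>) act (pi_elt act (xPi \<Phi> Sim x))
           (zprod (class_v (weyl \<Phi>) act (xPi \<Phi> Sim x) v) (hecke (weyl \<Phi>) act (Yword (weyl \<Phi>) act x I) z))
       = (\<lambda>u. hecke (weyl \<Phi>) act (Yword (weyl \<Phi>) act x I) z v * zone (weyl \<Phi>) u)"
proof -
  have "\<Phi> \<subseteq> \<Lambda>"
    using simple_root_system.roots_in_root_lattice[OF simple_root_system.intro[OF root simple]] lattice
    unfolding admissible_lattice_def by blast
  moreover have "x \<alpha> dvd 1" if "\<alpha> \<in> \<Phi>" for \<alpha>
    using x_unit that by (metis dvdI)
  ultimately interpret hecke_setting \<Phi> Sim \<Lambda> S x act
    using root simple action by unfold_locales
  define cv where "cv = class_v (weyl \<Phi>) act (xPi \<Phi> Sim x) v"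
  define y where "y = hecke (weyl \<Phi>) act (Yword (weyl \<Phi>) act x I) z"
  have "set I \<subseteq> Sim" using red unfolding reduced_word_def by blast
  then have "pairing (hecke (weyl \<Phi>) act (Yword (weyl \<Phi>) act x (rev I)) cv) z = pairing cv y"
    using pairing_hecke_Yword[of "rev I"] by (simp add: y_def)
  moreover have "pairing cv y = y v"
    unfolding cv_def by (rule pairing_class_v[OF v_in])
  moreover have "hecke (weyl \<Phi>) act (Yword (weyl \<Phi>) act x (rev I)) cv r * z r = 0"
    if "r \<notin> weyl \<Phi>" for r
    using z_in that unfolding struct_alg_def by auto
  moreover have "cv r * y r = 0" if "r \<notin> weyl \<Phi>" for r
    unfolding cv_def using class_v_apply[OF v_in] v_in that by auto
  ultimately show ?thesis
    unfolding cv_def[symmetric] y_def[symmetric] by (simp add: hecke_pi_zprod)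
qed

end
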